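(* Let $G$ be a finite connected graph with graph distance $d$ and let $\delta$ be its four-points hyperbolicity constant. Then $$\delta\le\max_{u_1,u_2,u_3,u_4\in V(G)}\ \min_{i\ne j} d(u_i,u_j).$$
   Context: The four-points hyperbolicity constant of $G$ is the smallest $\delta\ge0$ such that for all vertices $a,b,c,e$: $d(a,b)+d(c,e)\le\max\{d(a,c)+d(b,e),\ d(a,e)+d(b,c)\}+2\delta$. *)

theory Defs
  imports Complex_Main
begin

definition graph :: "'a set \<Rightarrow> ('a \<Rightarrow> 'a \<Rightarrow> bool) \<Rightarrow> bool" where
  "graph V E \<longleftrightarrow> (\<forall>u v. E u v \<longrightarrow> u \<in> V \<and> v \<in> V \<and> E v u \<and> u \<noteq> v)"

definition is_walk :: "'a set \<Rightarrow> ('a \<Rightarrow> 'a \<Rightarrow> bool) \<Rightarrow> 'a list \<Rightarrow> bool" where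
  "is_walk V E p \<longleftrightarrow> p \<noteq> [] \<and> set p \<subseteq> V \<and> (\<forall>i. Suc i < length p \<longrightarrow> E (p ! i) (p ! Suc i))"

definition connected_graph :: "'a set \<Rightarrow> ('a \<Rightarrow> 'a \<Rightarrow> bool) \<Rightarrow> bool" where
  "connected_graph V E \<longleftrightarrow> V \<noteq> {} \<and>
     (\<forall>u\<in>V. \<forall>v\<in>V. \<exists>p. is_walk V E p \<and> hd p = u \<and> last p = v)"

definition gdist :: "'a set \<Rightarrow> ('a \<Rightarrow> 'a \<Rightarrow> bool) \<Rightarrow> 'a \<Rightarrow> 'a \<Rightarrow> nat" where
  "gdist V E u v = (LEAST n. \<exists>p. is_walk V E p \<and> hd p = u \<and> last p = v \<and> length p = Suc n)"

definition four_point_cond :: "'a set \<Rightarrow> ('a \<Rightarrow> 'a \<Rightarrow> bool) \<Rightarrow> real \<Rightarrow> bool" where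
  "four_point_cond V E \<delta> \<longleftrightarrow> 0 \<le> \<delta> \<and>
     (\<forall>a\<in>V. \<forall>b\<in>V. \<forall>c\<in>V. \<forall>e\<in>V.
        real (gdist V E a b) + real (gdist V E c e)
          \<le> max (real (gdist V E a c) + real (gdist V E b e))
                (real (gdist V E a e) + real (gdist V E b c)) + 2 * \<delta>)"

definition hyperbolicity :: "'a set \<Rightarrow> ('a \<Rightarrow> 'a \<Rightarrow> bool) \<Rightarrow> real" where
  "hyperbolicity V E = (LEAST \<delta>. four_point_cond V E \<delta>)"

end

theory Submission imports Defs begin

text \<open>In any metric space the four-point defect of a quadruple is bounded by each of the six
  distances among its points: e.g. \<open>d(c,e) \<le> d(c,a) + d(a,b) + d(b,e)\<close> gives
  \<open>d(a,b) + d(c,e) \<le> d(a,c) + d(b,e) + 2 d(a,b)\<close>, and each of the other five distances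
  is handled by adding two triangle inequalities. So the smallest of the six distances is an
  admissible \<open>\<delta>\<close> for that quadruple, and the maximum over all quadruples is admissible for
  the whole graph; as the graph is finite, the least admissible \<open>\<delta>\<close> exists and lies below it.\<close>

lemma is_walk_singleton [simp]: "is_walk V E [x] \<longleftrightarrow> x \<in> V"
  by (auto simp: is_walk_def)

lemma is_walk_Cons_Cons [simp]:
  "is_walk V E (x # y # p) \<longleftrightarrow> x \<in> V \<and> E x y \<and> is_walk V E (y # p)"
  by (auto simp: is_walk_def nth_Cons less_Suc_eq_0_disj split: nat.splits)

lemma is_walk_append:
  "is_walk V E p \<Longrightarrow> is_walk V E q \<Longrightarrow> last p = hd q \<Longrightarrow> is_walk V E (p @ tl q)"
proof (induction p rule: induct_list012)
  case 1 then show ?case by (simp add: is_walk_def)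
next
  case (2 x) then show ?case by (cases q) auto
next
  case (3 x y p) then show ?case by auto
qed

lemma is_walk_snoc:
  "is_walk V E p \<Longrightarrow> E (last p) x \<Longrightarrow> x \<in> V \<Longrightarrow> is_walk V E (p @ [x])"
  by (induction p rule: induct_list012) (auto simp: is_walk_def[of V E "[]"])

lemma is_walk_rev:
  assumes "graph V E"
  shows "is_walk V E p \<Longrightarrow> is_walk V E (rev p)"
proof (induction p rule: induct_list012)
  case 1 then show ?case by (simp add: is_walk_def)
next
  case (2 x) then show ?case by simp
next
  case (3 x y p)
  then have "E y x" using assms by (auto simp: graph_def)
  with 3 show ?case using is_walk_snoc[of V E "rev (y # p)" x] by simp
qed

lemma gdist_shortest_walk:
  assumes "connected_graph V E" "u \<in> V" "v \<in> V"
  obtains p where "is_walk V E p" "hd p = u" "last p = v" "length p = Suc (gdist V E u v)"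
proof -
  obtain p where p: "is_walk V E p" "hd p = u" "last p = v"
    using assms unfolding connected_graph_def by blast
  then have "length p = Suc (length p - 1)" by (simp add: is_walk_def)
  with p have "\<exists>n p. is_walk V E p \<and> hd p = u \<and> last p = v \<and> length p = Suc n" by blast
  then have "\<exists>p. is_walk V E p \<and> hd p = u \<and> last p = v \<and> length p = Suc (gdist V E u v)"
    unfolding gdist_def by (rule LeastI_ex)
  with that show thesis by blast
qed

lemma gdist_le_walk:
  "is_walk V E p \<Longrightarrow> hd p = u \<Longrightarrow> last p = v \<Longrightarrow> length p = Suc n \<Longrightarrow> gdist V E u v \<le> n"
  unfolding gdist_def by (rule Least_le) blast

lemma gdist_le_commute:
  assumes "graph V E" "connected_graph V E" "u \<in> V" "v \<in> V"
  shows "gdist V E u v \<le> gdist V E v u"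
proof -
  obtain p where p: "is_walk V E p" "hd p = v" "last p = u" "length p = Suc (gdist V E v u)"
    using gdist_shortest_walk[OF assms(2,4,3)] .
  then have "p \<noteq> []" by (simp add: is_walk_def)
  with p is_walk_rev[OF assms(1) p(1)] show ?thesis
    by (intro gdist_le_walk[of V E "rev p"]) (auto simp: hd_rev last_rev)
qed

lemma gdist_commute:
  "graph V E \<Longrightarrow> connected_graph V E \<Longrightarrow> u \<in> V \<Longrightarrow> v \<in> V \<Longrightarrow> gdist V E u v = gdist V E v u"
  by (simp add: gdist_le_commute order.antisym)

lemma gdist_triangle:
  assumes "connected_graph V E" "u \<in> V" "v \<in> V" "w \<in> V"
  shows "gdist V E u w \<le> gdist V E u v + gdist V E v w"
proof -
  obtain p where p: "is_walk V E p" "hd p = u" "last p = v" "length p = Suc (gdist V E u v)"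
    using gdist_shortest_walk[OF assms(1,2,3)] .
  obtain q where q: "is_walk V E q" "hd q = v" "last q = w" "length q = Suc (gdist V E v w)"
    using gdist_shortest_walk[OF assms(1,3,4)] .
  have "p \<noteq> []" "q \<noteq> []" using p q by (auto simp: is_walk_def)
  moreover have "last (p @ tl q) = w" using p q \<open>q \<noteq> []\<close> by (cases q) auto
  ultimately show ?thesis using p q is_walk_append[OF p(1) q(1)]
    by (intro gdist_le_walk[of V E "p @ tl q"]) auto
qed

lemma finite_quadruple_image:
  "finite V \<Longrightarrow> finite {f a b c e | a b c e. a \<in> V \<and> b \<in> V \<and> c \<in> V \<and> e \<in> V}"
  by (rule finite_subset[of _ "(\<lambda>(a, b, c, e). f a b c e) ` (V \<times> V \<times> V \<times> V)"])
     (fastforce simp: image_iff, simp)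

lemma four_point_le_any_distance:
  fixes d :: "'a \<Rightarrow> 'a \<Rightarrow> real"
  assumes sym: "\<And>x y. x \<in> V \<Longrightarrow> y \<in> V \<Longrightarrow> d x y = d y x"
    and tri: "\<And>x y z. x \<in> V \<Longrightarrow> y \<in> V \<Longrightarrow> z \<in> V \<Longrightarrow> d x z \<le> d x y + d y z"
    and V: "a \<in> V" "b \<in> V" "c \<in> V" "e \<in> V"
    and r: "r \<in> {d a b, d a c, d a e, d b c, d b e, d c e}"
  shows "d a b + d c e \<le> max (d a c + d b e) (d a e + d b c) + 2 * r"
proof -
  have "d c e \<le> d c a + d a b + d b e" "d a b \<le> d a c + d c e + d e b"
       "d a b \<le> d a c + d c b" "d a b \<le> d a e + d e b"
       "d c e \<le> d c a + d a e" "d c e \<le> d c b + d b e"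
    using tri V by (meson add_mono order_trans order_refl)+
  then show ?thesis using r sym V by auto
qed

lemma gdist_four_point_le_any_distance:
  assumes "graph V E" "connected_graph V E" "a \<in> V" "b \<in> V" "c \<in> V" "e \<in> V"
    and "r \<in> {gdist V E a b, gdist V E a c, gdist V E a e,
               gdist V E b c, gdist V E b e, gdist V E c e}"
  shows "real (gdist V E a b) + real (gdist V E c e)
           \<le> max (real (gdist V E a c) + real (gdist V E b e))
                 (real (gdist V E a e) + real (gdist V E b c)) + 2 * real r"
proof (rule four_point_le_any_distance[where V = V and d = "\<lambda>x y. real (gdist V E x y)"])
  show "real (gdist V E x z) \<le> real (gdist V E x y) + real (gdist V E y z)"
    if "x \<in> V" "y \<in> V" "z \<in> V" for x y z
    using gdist_triangle[OF assms(2) that] by linarith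
qed (use assms in \<open>simp_all add: gdist_commute\<close>)

definition four_point_defect :: "'a set \<Rightarrow> ('a \<Rightarrow> 'a \<Rightarrow> bool) \<Rightarrow> 'a \<Rightarrow> 'a \<Rightarrow> 'a \<Rightarrow> 'a \<Rightarrow> real" where
  "four_point_defect V E a b c e =
     (real (gdist V E a b) + real (gdist V E c e)
        - max (real (gdist V E a c) + real (gdist V E b e))
              (real (gdist V E a e) + real (gdist V E b c))) / 2"

lemma four_point_cond_iff_Max_defect:
  fixes V :: "'a set" and E :: "'a \<Rightarrow> 'a \<Rightarrow> bool"
  assumes "finite V"
  defines "D \<equiv> {four_point_defect V E a b c e | a b c e. a \<in> V \<and> b \<in> V \<and> c \<in> V \<and> e \<in> V}"
  shows "four_point_cond V E \<delta> \<longleftrightarrow> Max (insert 0 D) \<le> \<delta>"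
proof -
  have "finite D" unfolding D_def using assms(1) by (rule finite_quadruple_image)
  then have "Max (insert 0 D) \<le> \<delta> \<longleftrightarrow> 0 \<le> \<delta> \<and>
      (\<forall>a\<in>V. \<forall>b\<in>V. \<forall>c\<in>V. \<forall>e\<in>V. four_point_defect V E a b c e \<le> \<delta>)"
    unfolding D_def by auto blast
  then show ?thesis
    unfolding four_point_cond_def four_point_defect_def by (simp add: field_simps)
qed

lemma hyperbolicity_le:
  assumes "finite V" "four_point_cond V E \<delta>"
  shows "hyperbolicity V E \<le> \<delta>"
proof -
  let ?d0 = "Max (insert 0 {four_point_defect V E a b c e | a b c e. a \<in> V \<and> b \<in> V \<and> c \<in> V \<and> e \<in> V})"
  have "hyperbolicity V E = ?d0"
    unfolding hyperbolicity_def four_point_cond_iff_Max_defect[OF assms(1)]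
    by (rule Least_equality) auto
  with assms show ?thesis by (simp add: four_point_cond_iff_Max_defect)
qed

theorem mainTheorem6:
  fixes V :: "'a set" and E :: "'a \<Rightarrow> 'a \<Rightarrow> bool"
  assumes "finite V" and "graph V E" and "connected_graph V E"
  shows "hyperbolicity V E \<le>
    real (Max {Min {gdist V E u1 u2, gdist V E u1 u3, gdist V E u1 u4,
                    gdist V E u2 u3, gdist V E u2 u4, gdist V E u3 u4}
              | u1 u2 u3 u4. u1 \<in> V \<and> u2 \<in> V \<and> u3 \<in> V \<and> u4 \<in> V})"
    (is "_ \<le> real (Max ?S)")
proof (rule hyperbolicity_le[OF assms(1)])
  define m where "m a b c e = Min {gdist V E a b, gdist V E a c, gdist V E a e,
                                    gdist V E b c, gdist V E b e, gdist V E c e}" for a b c e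
  have S: "?S = {m a b c e | a b c e. a \<in> V \<and> b \<in> V \<and> c \<in> V \<and> e \<in> V}"
    by (simp only: m_def)
  have "finite ?S" unfolding S using assms(1) by (rule finite_quadruple_image)
  show "four_point_cond V E (Max ?S)" unfolding four_point_cond_def
  proof (intro conjI ballI)
    fix a b c e assume V: "a \<in> V" "b \<in> V" "c \<in> V" "e \<in> V"
    have "m a b c e \<le> Max ?S" using \<open>finite ?S\<close> V unfolding S by (intro Max_ge) blast+
    moreover have "m a b c e \<in> {gdist V E a b, gdist V E a c, gdist V E a e,
                                   gdist V E b c, gdist V E b e, gdist V E c e}"
      unfolding m_def by (rule Min_in) simp_all
    ultimately show "real (gdist V E a b) + real (gdist V E c e)
        \<le> max (real (gdist V E a c) + real (gdist V E b e))
              (real (gdist V E a e) + real (gdist V E b c)) + 2 * real (Max ?S)"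
      using gdist_four_point_le_any_distance[OF assms(2,3) V, of "m a b c e"] by linarith
  qed simp
qed

end
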